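(* If $n$ is a non-negative integer and $s$ is a complex number that is not a negative integer, then $$\sum_{k = 1}^n \sum_{j = 0}^{k - 1} \frac{(- 1)^j s}{k - j} \binom{s}{n - j} = s\binom{s - 1}{n} H_n + \binom{s - 1}{n} - (- 1)^n.$$
   Context: For complex $s$ and non-negative integer $m$, $\binom{s}{m}=\frac{s(s-1)\cdots(s-m+1)}{m!}$. $H_n=\sum_{i=1}^n\frac1i$. Empty sums are zero. *)

theory Defs
  imports "HOL-Analysis.Analysis"
begin

end

theory Submission
  imports Defs
begin

text \<open>
  Swapping the order of summation and evaluating the inner sums, which are harmonic numbers,
  turns the left-hand side into \<open>\<Sum>i=1..n. (-1)^(n-i) s (s gchoose i) H\<^sub>i\<close>. This sum satisfies
  a first-order recurrence in \<open>n\<close>, which the absorption and addition formulas for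
  \<open>gchoose\<close> show to be solved by the right-hand side. The identity is polynomial in \<open>s\<close>,
  so it holds for every \<open>s\<close>.
\<close>

lemma sum_triangle_swap:
  fixes f :: "nat \<Rightarrow> nat \<Rightarrow> 'a :: comm_monoid_add"
  shows "(\<Sum>k=1..n. \<Sum>j=0..k-1. f j k) = (\<Sum>j<n. \<Sum>k=Suc j..n. f j k)"
proof -
  have "(\<Sum>k=1..n. \<Sum>j=0..k-1. f j k) = (\<Sum>k=1..n. \<Sum>j=0..<k. f j k)"
    by (intro sum.cong) (auto simp: atLeastLessThanSuc_atLeastAtMost)
  also have "\<dots> = (\<Sum>k=0..n. \<Sum>j=0..<k. f j k)"
    by (simp add: sum.atLeast_Suc_atMost)
  also have "\<dots> = (\<Sum>j<n. \<Sum>k=Suc j..n. f j k)"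
    unfolding atLeast0AtMost atLeast0LessThan by (rule sum.nested_swap')
  finally show ?thesis .
qed

lemma sum_inverse_diff_eq_harm:
  "(\<Sum>k=Suc j..n. inverse (of_nat (k - j))) = (harm (n - j) :: 'a :: real_normed_field)"
proof (cases "j \<le> n")
  case True
  have "(\<Sum>k=Suc j..n. inverse (of_nat (k - j)) :: 'a) = (\<Sum>k=1+j..(n-j)+j. inverse (of_nat (k - j)))"
    using True by simp
  also have "\<dots> = harm (n - j)"
    unfolding harm_def by (subst sum.shift_bounds_cl_nat_ivl) simp
  finally show ?thesis .
qed (simp add: harm_def)

lemma sum_alternating_gbinomial_harm:
  fixes s :: "'a :: real_normed_field"
  shows "(\<Sum>i=1..n. (-1)^(n-i) * s * (s gchoose i) * harm i)
       = s * ((s - 1) gchoose n) * harm n + ((s - 1) gchoose n) - (-1)^n"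
proof (induction n)
  case 0
  show ?case by (simp add: harm_def)
next
  case (Suc n)
  let ?C = "(s - 1) gchoose n" and ?D = "(s - 1) gchoose Suc n" and ?E = "s gchoose Suc n"
  let ?N = "of_nat (Suc n) :: 'a"
  have E: "?E = ?D + ?C"
    by (rule gbinomial_addition_formula)
  have "?N * ?E = s * ?C"
    by (rule gbinomial_absorption)
  then have sC: "s * ?C * inverse ?N = ?C + ?D"
    using E by (simp add: field_simps del: of_nat_Suc)
  have sign: "(-1::'a)^(Suc n - i) = - ((-1)^(n - i))" if "i \<le> n" for i
    using that by (simp add: Suc_diff_le)
  have "(\<Sum>i=1..Suc n. (-1)^(Suc n - i) * s * (s gchoose i) * harm i)
      = - (\<Sum>i=1..n. (-1)^(n-i) * s * (s gchoose i) * harm i) + s * ?E * harm (Suc n)"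
    by (simp add: sign sum_negf)
  also have "\<dots> = - (s * ?C * harm n + ?C - (-1)^n) + s * ?E * (harm n + inverse ?N)"
    by (simp only: Suc.IH harm_Suc)
  also have "\<dots> = s * ?D * harm (Suc n) + ?D - (-1)^Suc n"
    using E sC by (simp add: harm_Suc algebra_simps del: of_nat_Suc)
  finally show ?case .
qed

theorem proposition21:
  fixes n :: nat and s :: complex
  assumes "\<forall>m::nat. s \<noteq> - of_nat (Suc m)"
  shows "(\<Sum>k=1..n. \<Sum>j=0..k-1. (-1)^j * s / of_nat (k - j) * (s gchoose (n - j)))
       = s * ((s - 1) gchoose n) * harm n + ((s - 1) gchoose n) - (-1)^n"
proof -
  have "(\<Sum>k=1..n. \<Sum>j=0..k-1. (-1)^j * s / of_nat (k - j) * (s gchoose (n - j)))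
      = (\<Sum>j<n. \<Sum>k=Suc j..n. (-1)^j * s / of_nat (k - j) * (s gchoose (n - j)))"
    by (rule sum_triangle_swap)
  also have "\<dots> = (\<Sum>j<n. (-1)^j * s * (s gchoose (n - j)) * (\<Sum>k=Suc j..n. inverse (of_nat (k - j))))"
    by (simp add: sum_distrib_left divide_inverse mult_ac)
  also have "\<dots> = (\<Sum>j<n. (-1)^j * s * (s gchoose (n - j)) * harm (n - j))"
    by (simp only: sum_inverse_diff_eq_harm)
  also have "\<dots> = (\<Sum>i=1..n. (-1)^(n-i) * s * (s gchoose i) * harm i)"
    by (rule sum.reindex_bij_witness[of _ "\<lambda>i. n - i" "\<lambda>j. n - j"]) auto
  also have "\<dots> = s * ((s - 1) gchoose n) * harm n + ((s - 1) gchoose n) - (-1)^n"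
    by (rule sum_alternating_gbinomial_harm)
  finally show ?thesis .
qed

end
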